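(* (a) There exist a Fuchsian group $\Gamma$ and two subsets $F_1, F_2 \subset \mathbb{H}$ with $\mu(F_1) \neq \mu(F_2)$ such that each $F \in \{F_1, F_2\}$ satisfies: (i) $F$ is closed in $\mathbb{H}$; (ii) no two distinct points of the interior $\overset{\circ}{F}$ of $F$ are equivalent under $\Gamma$; (iii) for every $z \in \mathbb{H}$ there exists some $M \in \Gamma$ such that $Mz \in F$; (iv) $F = \overline{\overset{\circ}{F}}$. (b) Likewise, there exist a Fuchsian group $\Gamma$ and two subsets $F_1, F_2 \subset \mathbb{H}$ with $\mu(F_1) \neq \mu(F_2)$ such that each $F \in \{F_1, F_2\}$ satisfies $F = \overline{\overset{\circ}{F}}$ and there exists an open set $G \subset \mathbb{H}$ with: $F = \overline{G}$; no two distinct points of $G$ are equivalent under $\Gamma$; and for every $z \in \mathbb{H}$ there exists some $M \in \Gamma$ with $Mz \in F$.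
   Context: $\mathbb{H} = \{ z \in \mathbb{C} : \mathrm{Im}\, z > 0\}$ is the upper half-plane; closures $\overline{\,\cdot\,}$ and interiors are taken in $\mathbb{H}$. A Fuchsian group is a discrete subgroup $\Gamma$ of $\mathrm{PSL}_2(\mathbb{R})$, acting on $\mathbb{H}$ by $z \mapsto Mz = \frac{az+b}{cz+d}$ for $M = \pm\begin{pmatrix} a & b \\ c & d\end{pmatrix}$. Two points $z, w \in \mathbb{H}$ are equivalent under $\Gamma$ if $w = Mz$ for some $M \in \Gamma$. $\mu$ denotes the hyperbolic area measure on $\mathbb{H}$, $d\mu = y^{-2}\,dx\,dy$ (for $z = x+iy$). *)

theory Defs
  imports "HOL-Analysis.Analysis"
begin

definition uhp :: "complex set" where
  "uhp = {z. Im z > 0}"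

text \<open>Elements of PSL2(R) are represented by matrices in SL2(R); a subgroup of PSL2(R)
  is represented by its full preimage in SL2(R) (a subgroup containing -I).\<close>
definition SL2 :: "(real^2^2) set" where
  "SL2 = {A. det A = 1}"

definition mobius :: "real^2^2 \<Rightarrow> complex \<Rightarrow> complex" where
  "mobius A z = (of_real (A$1$1) * z + of_real (A$1$2)) / (of_real (A$2$1) * z + of_real (A$2$2))"

text \<open>A Fuchsian group: a discrete subgroup of PSL2(R), given via its preimage in SL2(R).
  Discreteness: the identity of PSL2(R) is isolated.\<close>
definition fuchsian :: "(real^2^2) set \<Rightarrow> bool" where
  "fuchsian \<Gamma> \<longleftrightarrow>
     \<Gamma> \<subseteq> SL2 \<and> mat 1 \<in> \<Gamma> \<and>
     (\<forall>A\<in>\<Gamma>. \<forall>B\<in>\<Gamma>. A ** B \<in> \<Gamma>) \<and>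
     (\<forall>A\<in>\<Gamma>. matrix_inv A \<in> \<Gamma>) \<and>
     (\<forall>A\<in>\<Gamma>. - A \<in> \<Gamma>) \<and>
     (\<exists>e>0. \<forall>A\<in>\<Gamma>. norm (A - mat 1) < e \<longrightarrow> A = mat 1 \<or> A = - mat 1)"

definition gequiv :: "(real^2^2) set \<Rightarrow> complex \<Rightarrow> complex \<Rightarrow> bool" where
  "gequiv \<Gamma> z w \<longleftrightarrow> (\<exists>M\<in>\<Gamma>. w = mobius M z)"

definition hyp_measure :: "complex measure" where
  "hyp_measure = density lborel (\<lambda>z. indicator uhp z * ennreal (1 / (Im z)\<^sup>2))"

definition hyp_area :: "complex set \<Rightarrow> ennreal" where
  "hyp_area F = emeasure hyp_measure F"

definition closure_H :: "complex set \<Rightarrow> complex set" where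
  "closure_H S = closure S \<inter> uhp"

definition interior_H :: "complex set \<Rightarrow> complex set" where
  "interior_H S = interior (S \<inter> uhp)"

end

theory Submission
  imports Defs
begin

(* Take the modular group SL2(Z), its standard fundamental domain D and the closure R of D.
   If V and W are disjoint open subsets of D whose closures cover D, and the closure of W stays
   inside D, then the closure of V \<union> (W + 1) is again a fundamental region: translation by 1
   belongs to the group, and the closures of V and W + 1 are disjoint.  Now choose a closed
   nowhere dense set K inside D of positive Lebesgue measure and separate V from W by the sign of
   sin (1 / dist (z, K)); every point of K is then a limit of both pieces.  Moving W by 1 counts K
   twice, so the new region has hyperbolic area at least area R + area K > area R, the area of R
   being finite. *)

section \<open>The modular group\<close>

definition mat2 :: "real \<Rightarrow> real \<Rightarrow> real \<Rightarrow> real \<Rightarrow> real^2^2" where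
  "mat2 a b c d = (\<chi> i j. if i = 1 then (if j = 1 then a else b) else (if j = 1 then c else d))"

lemma mat2_nth [simp]:
  "mat2 a b c d $1$1 = a" "mat2 a b c d $1$2 = b" "mat2 a b c d $2$1 = c" "mat2 a b c d $2$2 = d"
  by (simp_all add: mat2_def)

lemma det_mat2 [simp]: "det (mat2 a b c d) = a * d - b * c"
  by (simp add: det_2)

lemma matrix_2x2_eq_iff:
  "(A::real^2^2) = B \<longleftrightarrow> A$1$1 = B$1$1 \<and> A$1$2 = B$1$2 \<and> A$2$1 = B$2$1 \<and> A$2$2 = B$2$2"
  by (auto simp: vec_eq_iff forall_2)

lemma matrix_mult_2x2_nth: "((A::real^2^2) ** B)$i$j = A$i$1 * B$1$j + A$i$2 * B$2$j"
  by (simp add: matrix_matrix_mult_def sum_2)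

lemma mat_1_2x2_nth [simp]:
  "(mat 1 :: real^2^2)$1$1 = 1" "(mat 1 :: real^2^2)$1$2 = 0"
  "(mat 1 :: real^2^2)$2$1 = 0" "(mat 1 :: real^2^2)$2$2 = 1"
  by (simp_all add: mat_def)

lemma matrix_inv_2x2:
  fixes A :: "real^2^2"
  assumes "det A = 1"
  shows "matrix_inv A = mat2 (A$2$2) (- A$1$2) (- A$2$1) (A$1$1)"
proof -
  let ?B = "mat2 (A$2$2) (- A$1$2) (- A$2$1) (A$1$1)"
  have AB: "A ** ?B = mat 1" and "?B ** A = mat 1"
    using assms by (auto simp: matrix_2x2_eq_iff matrix_mult_2x2_nth det_2 algebra_simps)
  then have inv: "A ** matrix_inv A = mat 1 \<and> matrix_inv A ** A = mat 1"
    unfolding matrix_inv_def by (rule someI[of _ ?B, OF conjI])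
  have "matrix_inv A = matrix_inv A ** (A ** ?B)"
    by (simp add: AB matrix_mul_rid)
  also have "\<dots> = ?B"
    using inv by (simp add: matrix_mul_assoc matrix_mul_lid)
  finally show ?thesis .
qed

definition SL2Z :: "(real^2^2) set" where
  "SL2Z = {A. det A = 1 \<and> (\<forall>i j. A$i$j \<in> \<int>)}"

lemma SL2Z_iff:
  "A \<in> SL2Z \<longleftrightarrow> A$1$1 * A$2$2 - A$1$2 * A$2$1 = 1 \<and>
     A$1$1 \<in> \<int> \<and> A$1$2 \<in> \<int> \<and> A$2$1 \<in> \<int> \<and> A$2$2 \<in> \<int>"
  by (auto simp: SL2Z_def det_2 forall_2)

lemma SL2Z_det: "A \<in> SL2Z \<Longrightarrow> det A = 1"
  by (simp add: SL2Z_def)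

lemma mat_1_in_SL2Z: "mat 1 \<in> SL2Z"
  by (simp add: SL2Z_iff)

lemma SL2Z_mult: "A \<in> SL2Z \<Longrightarrow> B \<in> SL2Z \<Longrightarrow> A ** B \<in> SL2Z"
  by (auto simp: SL2Z_def det_mul matrix_mult_2x2_nth)

lemma SL2Z_matrix_inv: "A \<in> SL2Z \<Longrightarrow> matrix_inv A \<in> SL2Z"
  by (auto simp: SL2Z_iff matrix_inv_2x2 SL2Z_det algebra_simps)

lemma SL2Z_uminus: "A \<in> SL2Z \<Longrightarrow> - A \<in> SL2Z"
  by (simp add: SL2Z_iff)

lemma fuchsian_SL2Z: "fuchsian SL2Z"
  unfolding fuchsian_def
proof (intro conjI ballI)
  show "\<exists>e>0. \<forall>A\<in>SL2Z. norm (A - mat 1) < e \<longrightarrow> A = mat 1 \<or> A = - mat 1"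
  proof (intro exI[of _ "1/2"] conjI ballI impI)
    fix A :: "real^2^2"
    assume A: "A \<in> SL2Z" and small: "norm (A - mat 1) < 1/2"
    have "\<bar>(A - mat 1)$i$j\<bar> < 1/2" for i j
      using Finite_Cartesian_Product.norm_nth_le[where x="A - mat 1" and i=i]
        Finite_Cartesian_Product.norm_nth_le[where x="(A - mat 1)$i" and i=j] small by auto
    moreover have "(A - mat 1)$i$j \<in> \<int>" for i j
      using A by (auto simp: SL2Z_def mat_def)
    moreover have "x \<in> \<int> \<Longrightarrow> \<bar>x\<bar> < 1/2 \<Longrightarrow> x = 0" for x :: real
      by (auto elim!: Ints_cases)
    ultimately have "(A - mat 1)$i$j = 0" for i j
      by blast
    then show "A = mat 1 \<or> A = - mat 1"
      by (auto simp: vec_eq_iff)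
  qed simp
qed (auto simp: SL2_def SL2Z_det mat_1_in_SL2Z SL2Z_mult SL2Z_matrix_inv SL2Z_uminus)

definition mat_T :: "real \<Rightarrow> real^2^2" where
  "mat_T t = mat2 1 t 0 1"

definition mat_S :: "real^2^2" where
  "mat_S = mat2 0 (-1) 1 0"

lemma mat_T_in_SL2Z: "t \<in> \<int> \<Longrightarrow> mat_T t \<in> SL2Z"
  by (simp add: mat_T_def SL2Z_iff)

lemma mat_S_in_SL2Z: "mat_S \<in> SL2Z"
  by (simp add: mat_S_def SL2Z_iff)

section \<open>Moebius transformations\<close>

lemma mobius_denom_nonzero:
  fixes A :: "real^2^2"
  assumes "det A = 1" "Im z > 0"
  shows "of_real (A$2$1) * z + of_real (A$2$2) \<noteq> 0"
proof
  assume zero: "of_real (A$2$1) * z + of_real (A$2$2) = 0"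
  then have "Im (of_real (A$2$1) * z + of_real (A$2$2)) = 0"
    by simp
  then have "A$2$1 * Im z = 0"
    by simp
  then have "A$2$1 = 0" "A$2$2 = 0"
    using zero assms(2) by auto
  then show False
    using assms(1) by (simp add: det_2)
qed

lemma Im_mobius:
  fixes A :: "real^2^2"
  assumes "det A = 1"
  shows "Im (mobius A z) = Im z / (cmod (of_real (A$2$1) * z + of_real (A$2$2)))\<^sup>2"
proof -
  let ?num = "of_real (A$1$1) * z + of_real (A$1$2)" and ?den = "of_real (A$2$1) * z + of_real (A$2$2)"
  have "Im ?num * Re ?den - Re ?num * Im ?den = (A$1$1 * A$2$2 - A$1$2 * A$2$1) * Im z"
    by (simp add: algebra_simps)
  also have "\<dots> = Im z"
    using assms by (simp add: det_2)
  finally show ?thesis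
    unfolding mobius_def Im_divide cmod_power2 by simp
qed

lemma Im_mobius_pos:
  fixes A :: "real^2^2"
  assumes "det A = 1" "Im z > 0"
  shows "Im (mobius A z) > 0"
  using Im_mobius[OF assms(1)] mobius_denom_nonzero[OF assms] assms(2) by simp

lemma mobius_mult:
  fixes A B :: "real^2^2"
  assumes "det A = 1" "det B = 1" "Im z > 0"
  shows "mobius (A ** B) z = mobius A (mobius B z)"
proof -
  define p where "p = of_real (B$1$1) * z + of_real (B$1$2)"
  define q where "q = of_real (B$2$1) * z + of_real (B$2$2)"
  have q: "q \<noteq> 0"
    unfolding q_def by (rule mobius_denom_nonzero[OF assms(2,3)])
  have "mobius A (p / q) =
      ((of_real (A$1$1) * p + of_real (A$1$2) * q) / q) / ((of_real (A$2$1) * p + of_real (A$2$2) * q) / q)"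
    unfolding mobius_def using q by (simp add: add_divide_distrib)
  also have "\<dots> = (of_real (A$1$1) * p + of_real (A$1$2) * q) / (of_real (A$2$1) * p + of_real (A$2$2) * q)"
    using q by simp
  also have "\<dots> = mobius (A ** B) z"
    unfolding mobius_def matrix_mult_2x2_nth p_def q_def by (simp add: algebra_simps)
  finally show ?thesis
    by (simp add: mobius_def p_def q_def)
qed

lemma mobius_mat_1 [simp]: "mobius (mat 1) z = z"
  by (simp add: mobius_def)

lemma mobius_matrix_inv:
  fixes A :: "real^2^2"
  assumes "det A = 1" "Im z > 0"
  shows "mobius (matrix_inv A) (mobius A z) = z"
proof -
  have "matrix_inv A ** A = mat 1"
    using assms(1) by (auto simp: matrix_inv_2x2 matrix_2x2_eq_iff matrix_mult_2x2_nth det_2 algebra_simps)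
  moreover have "det (matrix_inv A) = 1"
    using assms(1) by (simp add: matrix_inv_2x2 det_2 mult.commute)
  ultimately show ?thesis
    using mobius_mult[of "matrix_inv A" A z] assms by simp
qed

lemma mobius_mat_T: "mobius (mat_T t) z = z + of_real t"
  by (simp add: mat_T_def mobius_def)

lemma mobius_mat_S: "mobius mat_S z = - 1 / z"
  by (simp add: mat_S_def mobius_def)

lemma image_mobius_mat_T: "mobius (mat_T t) ` S = (+) (of_real t) ` S"
  by (simp add: mobius_mat_T add.commute)

section \<open>Fundamental regions\<close>

lemma open_uhp: "open uhp"
  unfolding uhp_def by (rule open_halfspace_Im_gt)

lemma fuchsian_det: "fuchsian \<Gamma> \<Longrightarrow> M \<in> \<Gamma> \<Longrightarrow> det M = 1"
  by (auto simp: fuchsian_def SL2_def)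

lemma gequiv_sym:
  assumes "fuchsian \<Gamma>" "Im z > 0" "gequiv \<Gamma> z w"
  shows "gequiv \<Gamma> w z"
proof -
  obtain M where M: "M \<in> \<Gamma>" "w = mobius M z"
    using assms(3) by (auto simp: gequiv_def)
  then have "matrix_inv M \<in> \<Gamma>" "mobius (matrix_inv M) w = z"
    using assms(1,2) by (auto simp: fuchsian_def mobius_matrix_inv fuchsian_det)
  then show ?thesis
    by (auto simp: gequiv_def)
qed

lemma gequiv_trans:
  assumes "fuchsian \<Gamma>" "Im z > 0" "gequiv \<Gamma> z w" "gequiv \<Gamma> w u"
  shows "gequiv \<Gamma> z u"
proof -
  obtain M N where "M \<in> \<Gamma>" "w = mobius M z" "N \<in> \<Gamma>" "u = mobius N w"
    using assms(3,4) by (auto simp: gequiv_def)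
  then have "N ** M \<in> \<Gamma>" "u = mobius (N ** M) z"
    using assms(1,2) by (auto simp: fuchsian_def mobius_mult fuchsian_det)
  then show ?thesis
    by (auto simp: gequiv_def)
qed

definition gamma_injective :: "(real^2^2) set \<Rightarrow> complex set \<Rightarrow> bool" where
  "gamma_injective \<Gamma> S \<longleftrightarrow> (\<forall>z\<in>S. \<forall>w\<in>S. z \<noteq> w \<longrightarrow> \<not> gequiv \<Gamma> z w)"

definition gamma_covers :: "(real^2^2) set \<Rightarrow> complex set \<Rightarrow> bool" where
  "gamma_covers \<Gamma> F \<longleftrightarrow> (\<forall>z\<in>uhp. \<exists>M\<in>\<Gamma>. mobius M z \<in> F)"

definition fundamental_region :: "(real^2^2) set \<Rightarrow> complex set \<Rightarrow> bool" where
  "fundamental_region \<Gamma> F \<longleftrightarrow>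
     F \<subseteq> uhp \<and> closedin (top_of_set uhp) F \<and> gamma_injective \<Gamma> (interior_H F) \<and>
     gamma_covers \<Gamma> F \<and> F = closure_H (interior_H F)"

lemma gamma_injective_subset: "gamma_injective \<Gamma> S \<Longrightarrow> T \<subseteq> S \<Longrightarrow> gamma_injective \<Gamma> T"
  by (auto simp: gamma_injective_def)

lemma gamma_covers_mono: "gamma_covers \<Gamma> F \<Longrightarrow> F \<subseteq> F' \<Longrightarrow> gamma_covers \<Gamma> F'"
  by (force simp: gamma_covers_def)

text \<open>A point of the new set is equivalent to a point of \<open>A \<union> B\<close>, which determines it because
  A and B are disjoint.\<close>
lemma gamma_injective_Un_image:
  assumes \<Gamma>: "fuchsian \<Gamma>" and T: "T \<in> \<Gamma>" and inj: "gamma_injective \<Gamma> (A \<union> B)"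
    and "A \<union> B \<subseteq> uhp" "A \<inter> B = {}"
  shows "gamma_injective \<Gamma> (A \<union> mobius T ` B)"
proof -
  have rep: "\<exists>z0\<in>A \<union> B. gequiv \<Gamma> z0 z \<and> z = (if z0 \<in> A then z0 else mobius T z0)"
    if z: "z \<in> A \<union> mobius T ` B" for z
  proof (cases "z \<in> A")
    case True
    moreover have "mat 1 \<in> \<Gamma>"
      using \<Gamma> by (simp add: fuchsian_def)
    ultimately show ?thesis
      by (metis UnI1 gequiv_def mobius_mat_1)
  next
    case False
    then obtain b where "b \<in> B" "z = mobius T b"
      using z by blast
    then show ?thesis
      using T assms(5) by (auto simp: gequiv_def)
  qed
  show ?thesis
    unfolding gamma_injective_def
  proof (intro ballI impI notI)
    fix z w
    assume "z \<in> A \<union> mobius T ` B" "w \<in> A \<union> mobius T ` B" "z \<noteq> w" and zw: "gequiv \<Gamma> z w"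
    then obtain z0 w0 where z0: "z0 \<in> A \<union> B" "gequiv \<Gamma> z0 z" "z = (if z0 \<in> A then z0 else mobius T z0)"
      and w0: "w0 \<in> A \<union> B" "gequiv \<Gamma> w0 w" "w = (if w0 \<in> A then w0 else mobius T w0)"
      using rep by meson
    have pos: "Im z0 > 0" "Im w0 > 0" "Im z > 0"
      using z0 w0 assms(4) Im_mobius_pos[OF fuchsian_det[OF \<Gamma> T]] by (auto simp: uhp_def split: if_splits)
    have "gequiv \<Gamma> z0 w0"
      using gequiv_trans[OF \<Gamma> pos(1) z0(2) gequiv_trans[OF \<Gamma> pos(3) zw gequiv_sym[OF \<Gamma> pos(2) w0(2)]]] .
    then have "z0 = w0"
      using inj z0(1) w0(1) by (auto simp: gamma_injective_def)
    then show False
      using z0(3) w0(3) \<open>z \<noteq> w\<close> by (simp split: if_splits)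
  qed
qed

lemma gamma_covers_Un_image:
  assumes \<Gamma>: "fuchsian \<Gamma>" and T: "T \<in> \<Gamma>" and cov: "gamma_covers \<Gamma> (A \<union> B)"
  shows "gamma_covers \<Gamma> (A \<union> mobius T ` B)"
  unfolding gamma_covers_def
proof
  fix z assume z: "z \<in> uhp"
  then obtain M where M: "M \<in> \<Gamma>" "mobius M z \<in> A \<union> B"
    using cov by (auto simp: gamma_covers_def)
  have "T ** M \<in> \<Gamma>" "mobius (T ** M) z = mobius T (mobius M z)"
    using \<Gamma> T M(1) z by (auto simp: fuchsian_def uhp_def fuchsian_det mobius_mult)
  then show "\<exists>M\<in>\<Gamma>. mobius M z \<in> A \<union> mobius T ` B"
    using M by (metis Un_iff image_eqI)
qed

lemma interior_H_closure_H: "interior_H (closure_H G) = interior (closure G) \<inter> uhp"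
  unfolding interior_H_def closure_H_def using open_uhp by (simp add: interior_Int interior_open)

lemma closure_H_interior_H_closure_H:
  assumes "open G" "G \<subseteq> uhp"
  shows "closure_H (interior_H (closure_H G)) = closure_H G"
proof -
  have "G \<subseteq> interior (closure G) \<inter> uhp"
    using assms closure_subset[of G] interior_maximal by blast
  then have "closure G \<subseteq> closure (interior (closure G) \<inter> uhp)"
    by (rule closure_mono)
  moreover have "closure (interior (closure G) \<inter> uhp) \<subseteq> closure G"
    using interior_subset by (intro closure_minimal) auto
  ultimately show ?thesis
    by (subst interior_H_closure_H) (auto simp: closure_H_def)
qed

lemma fundamental_region_closure_H:
  assumes "open G" "G \<subseteq> uhp" "gamma_injective \<Gamma> (interior_H (closure_H G))"
    "gamma_covers \<Gamma> (closure_H G)"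
  shows "fundamental_region \<Gamma> (closure_H G)"
proof -
  have "closedin (top_of_set uhp) (closure_H G)"
    unfolding closure_H_def closedin_closed by (auto intro: exI[of _ "closure G"])
  then show ?thesis
    using assms closure_H_interior_H_closure_H[OF assms(1,2)]
    by (auto simp: fundamental_region_def closure_H_def)
qed

lemma fundamental_region_open_kernel:
  assumes "fundamental_region \<Gamma> F"
  shows "F \<subseteq> uhp \<and> F = closure_H (interior_H F) \<and>
    (\<exists>G. open G \<and> G \<subseteq> uhp \<and> F = closure_H G \<and> gamma_injective \<Gamma> G \<and> gamma_covers \<Gamma> F)"
  using assms interior_subset[of "F \<inter> uhp"]
  by (intro conjI exI[of _ "interior_H F"]) (auto simp: fundamental_region_def interior_H_def)

section \<open>The standard fundamental domain\<close>

definition modular_domain :: "complex set" where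
  "modular_domain = {w. \<bar>Re w\<bar> < 1/2 \<and> 1 < cmod w \<and> 0 < Im w}"

definition modular_region :: "complex set" where
  "modular_region = {w. \<bar>Re w\<bar> \<le> 1/2 \<and> 1 \<le> cmod w \<and> 0 < Im w}"

lemma open_modular_domain: "open modular_domain"
proof -
  have "open ({w. \<bar>Re w\<bar> < 1/2} \<inter> {w. 1 < cmod w} \<inter> {w. 0 < Im w})"
    by (intro open_Int open_Collect_less continuous_intros)
  moreover have "modular_domain = {w. \<bar>Re w\<bar> < 1/2} \<inter> {w. 1 < cmod w} \<inter> {w. 0 < Im w}"
    by (auto simp: modular_domain_def)
  ultimately show ?thesis
    by simp
qed

lemma modular_domain_subset: "modular_domain \<subseteq> modular_region"
  by (auto simp: modular_domain_def modular_region_def)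

lemma modular_region_subset_uhp: "modular_region \<subseteq> uhp"
  by (auto simp: modular_region_def uhp_def)

lemma modular_domain_subset_uhp: "modular_domain \<subseteq> uhp"
  using modular_domain_subset modular_region_subset_uhp by blast

lemma modular_region_Im_ge:
  assumes "z \<in> modular_region"
  shows "1/2 \<le> Im z"
proof -
  have "\<bar>Re z\<bar> \<le> 1/2" "1 \<le> cmod z" "0 < Im z"
    using assms by (auto simp: modular_region_def)
  then have "(Re z)\<^sup>2 \<le> 1/4" "1 \<le> (Re z)\<^sup>2 + (Im z)\<^sup>2"
    using power_mono[of "\<bar>Re z\<bar>" "1/2" 2] by (auto simp: one_le_power power_divide simp flip: cmod_power2)
  then have "(1/2)\<^sup>2 \<le> (Im z)\<^sup>2"
    by (simp add: power_divide)
  then show ?thesis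
    using \<open>0 < Im z\<close> by (simp add: abs_le_square_iff)
qed

text \<open>The path \<open>t \<mapsto> (1 - t) Re z + i (Im z + t)\<close> enters the open domain immediately.\<close>
lemma modular_region_subset_closure: "modular_region \<subseteq> closure modular_domain"
proof
  fix z assume z: "z \<in> modular_region"
  define f where "f t = Complex ((1 - t) * Re z) (Im z + t)" for t
  have "f t \<in> modular_domain" if t: "t \<in> {0<..1/2}" for t
  proof -
    have x: "\<bar>Re z\<bar> \<le> 1/2" and y: "1/2 \<le> Im z" and r: "1 \<le> (cmod z)\<^sup>2"
      using z modular_region_Im_ge[OF z] by (auto simp: modular_region_def one_le_power)
    have x2: "(Re z)\<^sup>2 \<le> 1/4"
      using power_mono[OF x, of 2] by (simp add: power_divide)
    have "\<bar>Re (f t)\<bar> = (1 - t) * \<bar>Re z\<bar>"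
      using t by (simp add: f_def abs_mult)
    also have "\<dots> \<le> (1 - t) * (1/2)"
      using t x by (intro mult_left_mono) auto
    also have "\<dots> < 1/2"
      using t by simp
    finally have re: "\<bar>Re (f t)\<bar> < 1/2" .
    have t0: "0 < t"
      using t by simp
    have "(cmod (f t))\<^sup>2 = (cmod z)\<^sup>2 + (2 * Im z * t + t\<^sup>2 - (Re z)\<^sup>2 * (2 * t - t\<^sup>2))"
      by (simp only: cmod_power2) (simp add: f_def power2_eq_square algebra_simps)
    moreover have "(Re z)\<^sup>2 * (2 * t - t\<^sup>2) \<le> 1/4 * (2 * t)"
      using t x2 by (intro mult_mono) (auto simp: power2_eq_square)
    moreover have "t \<le> 2 * Im z * t"
      using t y by simp
    ultimately have "1 < (cmod (f t))\<^sup>2"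
      using t0 r zero_le_power2[of t] by linarith
    then have "1 < cmod (f t)"
      using power_less_imp_less_base[of 1 2 "cmod (f t)"] by simp
    then show ?thesis
      using re t z by (simp add: modular_domain_def modular_region_def f_def)
  qed
  then have "f ` {0<..1/2} \<subseteq> closure modular_domain"
    using closure_subset by blast
  then have "f ` closure {0<..1/2} \<subseteq> closure modular_domain"
    by (intro image_closure_subset) (auto simp: f_def intro!: continuous_intros)
  moreover have "f 0 = z"
    by (simp add: f_def)
  ultimately show "z \<in> closure modular_domain"
    by force
qed

lemma closure_modular_domain_subset: "closure modular_domain \<subseteq> {w. \<bar>Re w\<bar> \<le> 1/2 \<and> 1 \<le> cmod w}"
  by (intro closure_minimal closed_Collect_conj closed_Collect_le continuous_intros)
    (auto simp: modular_domain_def)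

lemma closure_H_modular_domain: "closure_H modular_domain = modular_region"
  using closure_modular_domain_subset modular_region_subset_closure modular_region_subset_uhp
  by (auto simp: closure_H_def modular_region_def uhp_def)

lemma interior_modular_region: "interior modular_region = modular_domain"
proof -
  have Re_le: "interior {w. Re w \<le> b} = {w. Re w < b}" and Re_ge: "interior {w. b \<le> Re w} = {w. b < Re w}"
    for b
    using interior_halfspace_le[of "1::complex" b] interior_halfspace_ge[of "1::complex" b]
    by (simp_all add: inner_complex_def)
  have "modular_region = {w. Re w \<le> 1/2} \<inter> {w. -1/2 \<le> Re w} \<inter> - ball 0 1 \<inter> uhp"
    by (auto simp: modular_region_def uhp_def abs_le_iff)
  also have "interior \<dots> = {w. Re w < 1/2} \<inter> {w. -1/2 < Re w} \<inter> - cball 0 1 \<inter> uhp"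
    unfolding interior_Int interior_complement Re_le Re_ge using open_uhp by (simp add: interior_open)
  also have "\<dots> = modular_domain"
    by (auto simp: modular_domain_def uhp_def abs_less_iff)
  finally show ?thesis .
qed

lemma SL2Z_denom_bounds_if_Im_le:
  assumes z: "Im z > 0" and M: "M \<in> SL2Z" and le: "Im z \<le> Im (mobius M z)"
  shows "\<bar>M$2$1\<bar> \<le> 1 / Im z" "\<bar>M$2$2\<bar> \<le> 1 + \<bar>Re z\<bar> / Im z"
proof -
  define w where "w = of_real (M$2$1) * z + of_real (M$2$2)"
  have "w \<noteq> 0"
    using mobius_denom_nonzero[OF SL2Z_det[OF M] z] by (simp add: w_def)
  moreover have "Im (mobius M z) = Im z / (cmod w)\<^sup>2"
    using Im_mobius[OF SL2Z_det[OF M]] by (simp add: w_def)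
  ultimately have "cmod w \<le> 1"
    using le z by (simp add: le_divide_eq power_le_one_iff)
  then have c: "\<bar>M$2$1 * Im z\<bar> \<le> 1" and cd: "\<bar>M$2$1 * Re z + M$2$2\<bar> \<le> 1"
    using abs_Im_le_cmod[of w] abs_Re_le_cmod[of w] by (auto simp: w_def)
  then show c': "\<bar>M$2$1\<bar> \<le> 1 / Im z"
    using z by (simp add: abs_mult le_divide_eq)
  have "\<bar>M$2$2\<bar> \<le> \<bar>M$2$1 * Re z + M$2$2\<bar> + \<bar>M$2$1\<bar> * \<bar>Re z\<bar>"
    using abs_triangle_ineq4[of "M$2$1 * Re z + M$2$2" "M$2$1 * Re z"] by (simp add: abs_mult)
  moreover have "\<bar>M$2$1\<bar> * \<bar>Re z\<bar> \<le> \<bar>Re z\<bar> / Im z"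
    using mult_right_mono[OF c', of "\<bar>Re z\<bar>"] by simp
  ultimately show "\<bar>M$2$2\<bar> \<le> 1 + \<bar>Re z\<bar> / Im z"
    using cd by linarith
qed

lemma finite_Im_orbit_above:
  assumes z: "Im z > 0"
  shows "finite {Im (mobius M z) | M. M \<in> SL2Z \<and> Im z \<le> Im (mobius M z)}"
proof -
  define N where "N = \<lceil>1 + (1 + \<bar>Re z\<bar>) / Im z\<rceil>"
  define g where "g = (\<lambda>(c::int, d::int). Im z / (cmod (of_int c * z + of_int d))\<^sup>2)"
  have "{Im (mobius M z) | M. M \<in> SL2Z \<and> Im z \<le> Im (mobius M z)} \<subseteq> g ` ({-N..N} \<times> {-N..N})"
  proof safe
    fix M assume M: "M \<in> SL2Z" and le: "Im z \<le> Im (mobius M z)"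
    obtain c d :: int where cd: "M$2$1 = of_int c" "M$2$2 = of_int d"
      using M unfolding SL2Z_iff by (elim conjE Ints_cases) blast
    have "0 \<le> 1 / Im z" "0 \<le> \<bar>Re z\<bar> / Im z"
      using z by auto
    then have "\<bar>real_of_int c\<bar> \<le> of_int N" "\<bar>real_of_int d\<bar> \<le> of_int N"
      using SL2Z_denom_bounds_if_Im_le[OF z M le] cd le_of_int_ceiling[of "1 + (1 + \<bar>Re z\<bar>) / Im z"]
      by (simp_all add: N_def add_divide_distrib) linarith+
    then have "(c, d) \<in> {-N..N} \<times> {-N..N}"
      by auto
    moreover have "Im (mobius M z) = g (c, d)"
      using Im_mobius[OF SL2Z_det[OF M]] cd by (simp add: g_def)
    ultimately show "Im (mobius M z) \<in> g ` ({-N..N} \<times> {-N..N})"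
      by blast
  qed
  then show ?thesis
    by (rule finite_subset) auto
qed

lemma SL2Z_orbit_highest_point:
  assumes z: "Im z > 0"
  obtains M0 where "M0 \<in> SL2Z" "\<And>M. M \<in> SL2Z \<Longrightarrow> Im (mobius M z) \<le> Im (mobius M0 z)"
proof -
  define Y where "Y = {Im (mobius M z) | M. M \<in> SL2Z \<and> Im z \<le> Im (mobius M z)}"
  have "finite Y"
    unfolding Y_def by (rule finite_Im_orbit_above[OF z])
  moreover have "Im z \<in> Y"
    unfolding Y_def using mat_1_in_SL2Z by force
  ultimately have "Max Y \<in> Y"
    by (intro Max_in) auto
  then obtain M0 where M0: "M0 \<in> SL2Z" "Im z \<le> Im (mobius M0 z)" "Im (mobius M0 z) = Max Y"
    unfolding Y_def by auto
  have "Im (mobius M z) \<le> Im (mobius M0 z)" if "M \<in> SL2Z" for M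
  proof (cases "Im z \<le> Im (mobius M z)")
    case True
    then show ?thesis
      using that \<open>finite Y\<close> M0(3) unfolding Y_def by (auto intro: Max_ge)
  qed (use M0(2) in simp)
  then show ?thesis
    using that M0(1) by blast
qed

lemma Im_mobius_mat_S: "Im (mobius mat_S z) = Im z / (cmod z)\<^sup>2"
  by (simp add: mobius_mat_S Im_divide cmod_power2)

text \<open>A highest point of the orbit is moved into the strip by a translation; it then lies outside
  the unit disc, since otherwise the inversion would raise it further.\<close>
lemma gamma_covers_modular_region: "gamma_covers SL2Z modular_region"
  unfolding gamma_covers_def
proof
  fix z assume "z \<in> uhp"
  then have z: "Im z > 0"
    by (simp add: uhp_def)
  obtain M0 where M0: "M0 \<in> SL2Z" "\<And>M. M \<in> SL2Z \<Longrightarrow> Im (mobius M z) \<le> Im (mobius M0 z)"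
    using SL2Z_orbit_highest_point[OF z] by blast
  define M where "M = mat_T (- round (Re (mobius M0 z))) ** M0"
  have M: "M \<in> SL2Z"
    unfolding M_def by (intro SL2Z_mult mat_T_in_SL2Z M0(1)) simp
  define u where "u = mobius M z"
  have u: "u = mobius M0 z - of_int (round (Re (mobius M0 z)))"
    unfolding u_def M_def using z mat_T_in_SL2Z M0(1) by (simp add: mobius_mult SL2Z_det mobius_mat_T)
  then have "\<bar>Re u\<bar> \<le> 1/2"
    using of_int_round_abs_le[of "Re (mobius M0 z)"] by (simp add: abs_minus_commute)
  moreover have pos: "Im u > 0"
    unfolding u_def using Im_mobius_pos[OF SL2Z_det[OF M] z] .
  moreover have "1 \<le> cmod u"
  proof (rule ccontr)
    assume "\<not> 1 \<le> cmod u"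
    moreover have "u \<noteq> 0"
      using pos by auto
    ultimately have "Im u < Im u / (cmod u)\<^sup>2"
      using pos by (simp add: less_divide_eq power_less_one_iff)
    also have "\<dots> = Im (mobius (mat_S ** M) z)"
      unfolding u_def using z M by (simp add: mobius_mult SL2Z_det mat_S_in_SL2Z Im_mobius_mat_S)
    also have "\<dots> \<le> Im u"
      using M0(2)[of "mat_S ** M"] M mat_S_in_SL2Z u by (simp add: SL2Z_mult)
    finally show False
      by simp
  qed
  ultimately show "\<exists>M\<in>SL2Z. mobius M z \<in> modular_region"
    using M by (auto simp: modular_region_def u_def)
qed

lemma int_sq_sub_abs_mult_add_sq_ge_1:
  fixes c d :: real
  assumes "c \<in> \<int>" "d \<in> \<int>" "c \<noteq> 0"
  shows "1 \<le> c\<^sup>2 - \<bar>c\<bar> * \<bar>d\<bar> + d\<^sup>2"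
proof -
  have c: "1 \<le> \<bar>c\<bar>"
    using assms(1,3) by (auto elim!: Ints_cases)
  show ?thesis
  proof (cases "d = 0")
    case True
    have "1 \<le> \<bar>c\<bar>\<^sup>2"
      using c by (rule one_le_power)
    then show ?thesis
      using True by simp
  next
    case False
    then have "1 \<le> \<bar>d\<bar>"
      using assms(2) by (auto elim!: Ints_cases)
    then have "1 * 1 \<le> \<bar>c\<bar> * \<bar>d\<bar>"
      using c by (intro mult_mono) auto
    moreover have "c\<^sup>2 - \<bar>c\<bar> * \<bar>d\<bar> + d\<^sup>2 = (\<bar>c\<bar> - \<bar>d\<bar>)\<^sup>2 + \<bar>c\<bar> * \<bar>d\<bar>"
      by (simp add: power2_eq_square algebra_simps)
    ultimately show ?thesis
      using zero_le_power2[of "\<bar>c\<bar> - \<bar>d\<bar>"] by linarith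
  qed
qed

text \<open>\<open>|cz + d|\<^sup>2 = c\<^sup>2|z|\<^sup>2 + 2cd Re z + d\<^sup>2 > c\<^sup>2 - |cd| + d\<^sup>2 \<ge> 1\<close>.\<close>
lemma modular_domain_denom_gt_1:
  assumes z: "z \<in> modular_domain" and "c \<in> \<int>" "d \<in> \<int>" "c \<noteq> 0"
  shows "1 < (cmod (of_real c * z + of_real d))\<^sup>2"
proof -
  have "c\<^sup>2 < c\<^sup>2 * (cmod z)\<^sup>2"
    using z assms(4) by (simp add: modular_domain_def one_less_power)
  moreover have "- (\<bar>c\<bar> * \<bar>d\<bar>) \<le> 2 * c * d * Re z"
  proof -
    have "\<bar>2 * c * d * Re z\<bar> = \<bar>c\<bar> * \<bar>d\<bar> * (2 * \<bar>Re z\<bar>)"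
      by (simp add: abs_mult)
    also have "\<dots> \<le> \<bar>c\<bar> * \<bar>d\<bar>"
      using z by (intro mult_left_le) (auto simp: modular_domain_def)
    finally show ?thesis
      by linarith
  qed
  moreover have "(cmod (of_real c * z + of_real d))\<^sup>2 = c\<^sup>2 * (cmod z)\<^sup>2 + 2 * c * d * Re z + d\<^sup>2"
    unfolding cmod_power2 by (simp add: power2_eq_square algebra_simps)
  ultimately show ?thesis
    using int_sq_sub_abs_mult_add_sq_ge_1[OF assms(2-4)] by linarith
qed

lemma mobius_SL2Z_upper_triangular:
  assumes M: "M \<in> SL2Z" and c: "M$2$1 = 0"
  obtains n where "n \<in> \<int>" "\<And>z. mobius M z = z + of_real n"
proof -
  obtain a b d :: int where abd: "M$1$1 = of_int a" "M$1$2 = of_int b" "M$2$2 = of_int d"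
    using M unfolding SL2Z_iff by (elim conjE Ints_cases) blast
  have "real_of_int (a * d) = 1"
    using M c abd by (simp add: SL2Z_iff)
  then have "a * d = 1"
    by linarith
  then have "a = d" "d = 1 \<or> d = -1"
    by (auto simp: zmult_eq_1_iff)
  then have "mobius M z = z + of_real (of_int (a * b))" for z
    using abd c by (elim disjE) (simp_all add: mobius_def)
  then show ?thesis
    by (intro that[of "of_int (a * b)"]) simp_all
qed

lemma modular_domain_eq_if_Im_le:
  assumes z: "z \<in> modular_domain" and w: "w \<in> modular_domain" and M: "M \<in> SL2Z"
    and wM: "w = mobius M z" and le: "Im z \<le> Im w"
  shows "w = z"
proof -
  have y: "Im z > 0"
    using z by (simp add: modular_domain_def)
  define q where "q = (cmod (of_real (M$2$1) * z + of_real (M$2$2)))\<^sup>2"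
  have "Im w = Im z / q"
    using Im_mobius[OF SL2Z_det[OF M]] wM by (simp add: q_def)
  moreover have "1 < q \<Longrightarrow> Im z / q < Im z"
    using y by (simp add: divide_less_eq)
  ultimately have "\<not> 1 < q"
    using le by linarith
  then have "\<not> 1 < (cmod (of_real (M$2$1) * z + of_real (M$2$2)))\<^sup>2"
    by (simp add: q_def)
  then have "M$2$1 = 0"
    using modular_domain_denom_gt_1[OF z] M by (auto simp: SL2Z_iff)
  then obtain n where n: "n \<in> \<int>" "\<And>z. mobius M z = z + of_real n"
    using mobius_SL2Z_upper_triangular[OF M] by blast
  have "\<bar>Re z\<bar> < 1/2" "\<bar>Re z + n\<bar> < 1/2"
    using z w by (auto simp: modular_domain_def wM n(2))
  then have "\<bar>n\<bar> < 1"
    by linarith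
  then have "n = 0"
    using n(1) by (auto elim!: Ints_cases)
  then show ?thesis
    by (simp add: wM n(2))
qed

lemma gamma_injective_modular_domain: "gamma_injective SL2Z modular_domain"
  unfolding gamma_injective_def gequiv_def
proof (intro ballI impI notI)
  fix z w
  assume z: "z \<in> modular_domain" and w: "w \<in> modular_domain" and "z \<noteq> w"
    and "\<exists>M\<in>SL2Z. w = mobius M z"
  then obtain M where M: "M \<in> SL2Z" "w = mobius M z"
    by blast
  have "z = mobius (matrix_inv M) w"
    using M z by (simp add: mobius_matrix_inv SL2Z_det modular_domain_def)
  then have "w = z"
    using modular_domain_eq_if_Im_le[OF z w M] modular_domain_eq_if_Im_le[OF w z SL2Z_matrix_inv[OF M(1)]]
    by (cases "Im z \<le> Im w") auto
  then show False
    using \<open>z \<noteq> w\<close> by simp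
qed

lemma fundamental_region_modular_region: "fundamental_region SL2Z modular_region"
proof -
  have "interior_H modular_region = modular_domain"
    using modular_region_subset_uhp interior_modular_region
    by (simp add: interior_H_def Int_absorb2)
  then show ?thesis
    using fundamental_region_closure_H[OF open_modular_domain modular_domain_subset_uhp]
      gamma_injective_modular_domain gamma_covers_modular_region
    by (simp add: closure_H_modular_domain)
qed

section \<open>Hyperbolic area\<close>

definition hyp_density :: "complex \<Rightarrow> ennreal" where
  "hyp_density z = indicator uhp z * ennreal (1 / (Im z)\<^sup>2)"

lemma uhp_sets [measurable]: "uhp \<in> sets borel"
  using open_uhp by (rule borel_open)

lemma hyp_density_measurable [measurable]: "hyp_density \<in> borel_measurable borel"
  unfolding hyp_density_def by measurable

lemma sets_hyp_measure [simp]: "sets hyp_measure = sets borel"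
  by (simp add: hyp_measure_def)

lemma hyp_area_nn_integral:
  "A \<in> sets borel \<Longrightarrow> hyp_area A = (\<integral>\<^sup>+ z. hyp_density z * indicator A z \<partial>lborel)"
  unfolding hyp_area_def hyp_measure_def hyp_density_def[symmetric]
  by (rule emeasure_density) auto

lemma hyp_area_le_lborel:
  assumes A: "A \<in> sets borel" and sub: "A \<subseteq> {z. a \<le> Im z}" and a: "a > 0"
  shows "hyp_area A \<le> ennreal (1 / a\<^sup>2) * emeasure lborel A"
proof -
  have "hyp_density z * indicator A z \<le> ennreal (1 / a\<^sup>2) * indicator A z" for z
  proof (cases "z \<in> A")
    case True
    then have "a \<le> Im z"
      using sub by auto
    then have "1 / (Im z)\<^sup>2 \<le> 1 / a\<^sup>2"
      using a by (intro divide_left_mono power_mono) auto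
    then show ?thesis
      using True by (auto simp: hyp_density_def indicator_def intro: ennreal_leI)
  qed simp
  then have "hyp_area A \<le> (\<integral>\<^sup>+ z. ennreal (1 / a\<^sup>2) * indicator A z \<partial>lborel)"
    unfolding hyp_area_nn_integral[OF A] by (rule nn_integral_mono)
  also have "\<dots> = ennreal (1 / a\<^sup>2) * emeasure lborel A"
    using A by (intro nn_integral_cmult_indicator) simp
  finally show ?thesis .
qed

lemma hyp_area_eq_0_iff:
  assumes A: "A \<in> sets borel" "A \<subseteq> uhp"
  shows "hyp_area A = 0 \<longleftrightarrow> emeasure lborel A = 0"
proof -
  have "hyp_density z * indicator A z = 0 \<longleftrightarrow> z \<notin> A" for z
    using A(2) by (auto simp: hyp_density_def indicator_def uhp_def)
  then have "hyp_area A = 0 \<longleftrightarrow> (AE z in lborel. z \<notin> A)"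
    unfolding hyp_area_nn_integral[OF A(1)] using A(1) by (subst nn_integral_0_iff_AE) auto
  also have "\<dots> \<longleftrightarrow> emeasure lborel A = 0"
    using A(1) by (subst AE_iff_measurable[of A]) auto
  finally show ?thesis .
qed

lemma hyp_area_translation:
  assumes A: "A \<in> sets borel" and TA: "(+) (of_real t) ` A \<in> sets borel"
  shows "hyp_area ((+) (of_real t) ` A) = hyp_area A"
proof -
  have "hyp_area ((+) (of_real t) ` A) =
      (\<integral>\<^sup>+ z. hyp_density z * indicator ((+) (of_real t) ` A) z \<partial>distr lborel borel ((+) (of_real t)))"
    unfolding hyp_area_nn_integral[OF TA] by (simp add: lborel_distr_plus)
  also have "\<dots> = (\<integral>\<^sup>+ z. hyp_density (of_real t + z) * indicator ((+) (of_real t) ` A) (of_real t + z) \<partial>lborel)"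
    using TA by (intro nn_integral_distr) auto
  also have "\<dots> = (\<integral>\<^sup>+ z. hyp_density z * indicator A z \<partial>lborel)"
    by (intro nn_integral_cong) (auto simp: hyp_density_def uhp_def indicator_def)
  finally show ?thesis
    by (simp add: hyp_area_nn_integral[OF A])
qed

lemma hyp_area_cbox_le:
  assumes "0 < c" "x0 \<le> x1" "c \<le> d"
  shows "hyp_area (cbox (Complex x0 c) (Complex x1 d)) \<le> ennreal ((x1 - x0) * (d - c) / c\<^sup>2)"
proof -
  have "hyp_area (cbox (Complex x0 c) (Complex x1 d)) \<le>
      ennreal (1 / c\<^sup>2) * emeasure lborel (cbox (Complex x0 c) (Complex x1 d))"
    using assms by (intro hyp_area_le_lborel) (auto simp: cbox_complex_eq)
  also have "\<dots> = ennreal (1 / c\<^sup>2) * ennreal ((x1 - x0) * (d - c))"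
    using assms by (simp add: emeasure_lborel_cbox_eq Basis_complex_def inner_complex_def)
  also have "\<dots> = ennreal ((x1 - x0) * (d - c) / c\<^sup>2)"
    using assms by (simp add: ennreal_mult[symmetric])
  finally show ?thesis .
qed

lemma half_strip_subset_Union_cbox:
  assumes "0 < b"
  shows "{z. \<bar>Re z\<bar> \<le> a \<and> b \<le> Im z} \<subseteq>
    (\<Union>n. cbox (Complex (-a) (b * (real n + 1))) (Complex a (b * (real n + 2))))"
proof
  fix z assume z: "z \<in> {z. \<bar>Re z\<bar> \<le> a \<and> b \<le> Im z}"
  define n where "n = nat (\<lfloor>Im z / b\<rfloor> - 1)"
  have "1 \<le> Im z / b"
    using z assms by simp
  then have "real n + 1 \<le> Im z / b" "Im z / b \<le> real n + 2"
    unfolding n_def by linarith+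
  then have "b * (real n + 1) \<le> Im z" "Im z \<le> b * (real n + 2)"
    using assms by (simp_all add: field_simps)
  then show "z \<in> (\<Union>n. cbox (Complex (-a) (b * (real n + 1))) (Complex a (b * (real n + 2))))"
    using z by (auto simp: cbox_complex_eq abs_le_iff)
qed

lemma hyp_area_half_strip_finite:
  assumes a: "0 \<le> a" and b: "0 < b"
  shows "hyp_area {z. \<bar>Re z\<bar> \<le> a \<and> b \<le> Im z} < \<infinity>"
proof -
  define R where "R n = cbox (Complex (-a) (b * (real n + 1))) (Complex a (b * (real n + 2)))" for n
  have R_sets: "R n \<in> sets hyp_measure" for n
    by (simp add: R_def)
  have "{z. \<bar>Re z\<bar> \<le> a \<and> b \<le> Im z} \<subseteq> (\<Union>n. R n)"
    unfolding R_def by (rule half_strip_subset_Union_cbox[OF b])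
  then have "hyp_area {z. \<bar>Re z\<bar> \<le> a \<and> b \<le> Im z} \<le> hyp_area (\<Union>n. R n)"
    unfolding hyp_area_def using R_sets by (intro emeasure_mono) auto
  also have "\<dots> \<le> (\<Sum>n. hyp_area (R n))"
    unfolding hyp_area_def using R_sets by (intro emeasure_subadditive_countably) auto
  also have "\<dots> \<le> (\<Sum>n. ennreal (2 * a / b * (1 / (real n + 1)\<^sup>2)))"
  proof (intro suminf_le summableI)
    fix n
    define x where "x = real n + 1"
    have "x > 0" "b * (real n + 2) - b * x = b"
      by (simp_all add: x_def algebra_simps)
    then have "(a - - a) * (b * (real n + 2) - b * x) / (b * x)\<^sup>2 = 2 * a / b * (1 / x\<^sup>2)"
      using b by (simp add: power2_eq_square)
    then show "hyp_area (R n) \<le> ennreal (2 * a / b * (1 / (real n + 1)\<^sup>2))"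
      using hyp_area_cbox_le[of "b * x" "-a" a "b * (real n + 2)"] a b \<open>x > 0\<close>
      by (simp add: R_def x_def)
  qed
  also have "\<dots> < \<infinity>"
  proof -
    have "summable (\<lambda>n. 1 / (real n + 1)\<^sup>2)"
      using summable_Suc_iff[of "\<lambda>n. 1 / (real n)\<^sup>2"] inverse_power_summable[of 2]
      by (simp add: inverse_eq_divide add.commute)
    then have "summable (\<lambda>n. 2 * a / b * (1 / (real n + 1)\<^sup>2))"
      by (rule summable_mult)
    then show ?thesis
      using a b by (simp add: ennreal_suminf_neq_top less_top)
  qed
  finally show ?thesis .
qed

lemma hyp_area_modular_region_finite: "hyp_area modular_region < \<infinity>"
proof -
  have "modular_region \<in> sets hyp_measure"
    by (simp flip: closure_H_modular_domain add: closure_H_def)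
  moreover have "modular_region \<subseteq> {z. \<bar>Re z\<bar> \<le> 1/2 \<and> 1/2 \<le> Im z}"
    using modular_region_Im_ge by (auto simp: modular_region_def)
  ultimately have "hyp_area modular_region \<le> hyp_area {z. \<bar>Re z\<bar> \<le> 1/2 \<and> 1/2 \<le> Im z}"
    unfolding hyp_area_def by (intro emeasure_mono) auto
  also have "\<dots> < \<infinity>"
    by (rule hyp_area_half_strip_finite) simp_all
  finally show ?thesis .
qed

section \<open>Splitting an open set along a nowhere dense set\<close>

lemma obtain_dense_sequence:
  obtains q :: "nat \<Rightarrow> 'a::euclidean_space" where "closure (range q) = UNIV"
proof -
  obtain D :: "'a set" where D: "countable D" "\<And>X. open X \<Longrightarrow> X \<noteq> {} \<Longrightarrow> \<exists>d\<in>D. d \<in> X"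
    using countable_dense_exists by blast
  then have "D \<noteq> {}"
    by blast
  have "\<exists>d\<in>D. dist d x < e" if "e > 0" for x :: 'a and e
    using D(2)[of "ball x e"] that by (auto simp: dist_commute)
  then have "closure D = UNIV"
    by (auto simp: closure_approachable)
  then show ?thesis
    using that[of "from_nat_into D"] D(1) \<open>D \<noteq> {}\<close> by simp
qed

lemma open_dense_small_measure:
  assumes "\<epsilon> > 0"
  obtains U :: "complex set" where "open U" "closure U = UNIV" "emeasure lborel U \<le> ennreal \<epsilon>"
proof -
  obtain q :: "nat \<Rightarrow> complex" where q: "closure (range q) = UNIV"
    by (rule obtain_dense_sequence)
  define r where "r n = sqrt \<epsilon> / 4 * (1/2) ^ n" for n
  define B where "B n = box (q n - Complex (r n) (r n)) (q n + Complex (r n) (r n))" for n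
  have r: "r n > 0" for n
    using assms by (simp add: r_def)
  have "open (\<Union>n. B n)"
    by (auto simp: B_def)
  moreover have "range q \<subseteq> (\<Union>n. B n)"
    using r by (auto simp: B_def box_complex_eq)
  then have "closure (\<Union>n. B n) = UNIV"
    using closure_mono q by blast
  moreover have "emeasure lborel (\<Union>n. B n) \<le> ennreal \<epsilon>"
  proof -
    have "emeasure lborel (B n) = ennreal (\<epsilon> / 4 * (1/4) ^ n)" for n
    proof -
      have "emeasure lborel (B n) = ennreal ((2 * r n) * (2 * r n))"
        using r[of n] by (simp add: B_def emeasure_lborel_box_eq Basis_complex_def inner_complex_def)
      also have "(2 * r n) * (2 * r n) = \<epsilon> / 4 * (1/4) ^ n"
        using assms by (simp add: r_def power_mult_distrib[symmetric] field_simps)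
      finally show ?thesis .
    qed
    moreover have "(\<lambda>n. \<epsilon> / 4 * (1/4) ^ n) sums (\<epsilon> / 3)"
      using sums_mult[OF geometric_sums[of "1/4::real"], of "\<epsilon> / 4"] by simp
    then have "(\<Sum>n. ennreal (\<epsilon> / 4 * (1/4) ^ n)) = ennreal (\<epsilon> / 3)"
      using assms by (intro suminf_ennreal_eq) auto
    ultimately have "(\<Sum>n. emeasure lborel (B n)) = ennreal (\<epsilon> / 3)"
      by simp
    moreover have "emeasure lborel (\<Union>n. B n) \<le> (\<Sum>n. emeasure lborel (B n))"
      by (rule emeasure_subadditive_countably) (auto simp: B_def)
    moreover have "ennreal (\<epsilon> / 3) \<le> ennreal \<epsilon>"
      using assms by (intro ennreal_leI) simp
    ultimately show ?thesis
      by simp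
  qed
  ultimately show ?thesis
    using that by blast
qed

text \<open>Remove from C an open dense set of smaller measure.\<close>
lemma closed_nowhere_dense_subset:
  fixes C :: "complex set"
  assumes C: "closed C" "emeasure lborel C > 0"
  obtains K where "K \<subseteq> C" "closed K" "interior K = {}" "emeasure lborel K > 0"
proof -
  obtain x where x: "0 < x" "x < emeasure lborel C"
    using dense[OF C(2)] by blast
  then obtain \<epsilon> where \<epsilon>: "x = ennreal \<epsilon>" "\<epsilon> > 0"
    by (cases x) (auto simp: top_unique)
  obtain U :: "complex set" where U: "open U" "closure U = UNIV" "emeasure lborel U \<le> ennreal \<epsilon>"
    using open_dense_small_measure[OF \<epsilon>(2)] by blast
  have "interior (C - U) \<subseteq> interior (- U)"
    by (intro interior_mono) auto
  then have "interior (C - U) = {}"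
    using U(2) by (simp add: interior_complement)
  moreover have "emeasure lborel (C - U) > 0"
  proof (rule ccontr)
    assume "\<not> emeasure lborel (C - U) > 0"
    then have "emeasure lborel (C - U) = 0"
      by simp
    moreover have "emeasure lborel C \<le> emeasure lborel (C - U) + emeasure lborel U"
      using C U by (intro order_trans[OF emeasure_mono emeasure_subadditive]) auto
    ultimately have "emeasure lborel C \<le> ennreal \<epsilon>"
      using U(3) by simp
    then show False
      using x \<epsilon>(1) by simp
  qed
  moreover have "closed (C - U)"
    using C(1) U(1) by (rule closed_Diff)
  ultimately show ?thesis
    using that[of "C - U"] by blast
qed

lemma sin_inverse_eq_near_0:
  fixes c :: real
  assumes "\<eta> > 0"
  obtains \<tau> where "0 < \<tau>" "\<tau> < \<eta>" "sin (1 / \<tau>) = sin c"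
proof -
  obtain n :: nat where n: "(1 / \<eta> + \<bar>c\<bar>) / (2 * pi) < real n"
    using reals_Archimedean2 by blast
  define a where "a = c + 2 * real n * pi"
  have "1 / \<eta> + \<bar>c\<bar> < real n * (2 * pi)"
    using n pi_gt_zero by (simp add: pos_divide_less_eq)
  then have "1 / \<eta> < a"
    unfolding a_def using abs_ge_minus_self[of c] by linarith
  moreover have "0 < a"
    using \<open>1 / \<eta> < a\<close> assms by (smt (verit) divide_pos_pos)
  moreover have "sin a = sin c"
    by (simp add: a_def sin_add)
  ultimately show ?thesis
    using assms by (intro that[of "1 / a"]) (auto simp: divide_less_eq mult.commute)
qed

text \<open>Since K has empty interior there is a point u \<notin> K close to k; along the segment from k
  to u the distance to K runs continuously through every value between 0 and infdist u K.\<close>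
lemma infdist_takes_small_values_near:
  fixes K D :: "'a::real_normed_vector set"
  assumes "open D" "K \<subseteq> D" "closed K" "interior K = {}" "k \<in> K" "e > 0"
  obtains \<eta> where "\<eta> > 0" "\<And>\<tau>. 0 < \<tau> \<Longrightarrow> \<tau> < \<eta> \<Longrightarrow> \<exists>p\<in>D. dist p k < e \<and> infdist p K = \<tau>"
proof -
  obtain r where r: "r > 0" "ball k r \<subseteq> D"
    using assms(1,2,5) open_contains_ball by blast
  define e' where "e' = min e r"
  have "e' > 0"
    using assms(6) r(1) by (simp add: e'_def)
  then have "\<not> ball k e' \<subseteq> K"
    using assms(4) interior_maximal[of "ball k e'" K] by auto
  then obtain u where u: "u \<in> ball k e'" "u \<notin> K"
    by blast
  have \<eta>: "infdist u K > 0"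
    using assms(3,5) u(2) by (intro infdist_pos_not_in_closed) auto
  have "\<exists>p\<in>D. dist p k < e \<and> infdist p K = \<tau>" if \<tau>: "0 < \<tau>" "\<tau> < infdist u K" for \<tau>
  proof -
    define f where "f t = infdist (k + t *\<^sub>R (u - k)) K" for t
    have "continuous_on {0..1} f"
      unfolding f_def by (intro continuous_intros)
    moreover have "f 0 = 0" "f 1 = infdist u K"
      using assms(5) by (simp_all add: f_def)
    ultimately obtain t where t: "0 \<le> t" "t \<le> 1" "f t = \<tau>"
      using IVT'[of f 0 \<tau> 1] \<tau> by auto
    have "dist (k + t *\<^sub>R (u - k)) k = t * dist u k"
      using t by (simp add: dist_norm)
    also have "\<dots> \<le> dist u k"
      using t by (simp add: mult_left_le_one_le)
    finally have "dist (k + t *\<^sub>R (u - k)) k < e'"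
      using u(1) by (simp add: dist_commute)
    then show ?thesis
      using r(2) t(3) by (intro bexI[of _ "k + t *\<^sub>R (u - k)"]) (auto simp: e'_def f_def dist_commute)
  qed
  then show ?thesis
    using that \<eta> by blast
qed

lemma nowhere_dense_subset_closure_sin_level:
  fixes K D :: "'a::real_normed_vector set"
  assumes D: "open D" and K: "K \<subseteq> D" "closed K" "interior K = {}" and \<delta>: "\<delta> > 0"
  shows "K \<subseteq> closure {z\<in>D. 0 < infdist z K \<and> infdist z K < \<delta> \<and> sin (1 / infdist z K) = sin c}"
    (is "_ \<subseteq> closure ?S")
proof
  fix k assume "k \<in> K"
  show "k \<in> closure ?S"
    unfolding closure_approachable
  proof (intro allI impI)
    fix e :: real assume "e > 0"
    obtain \<eta> where \<eta>: "\<eta> > 0" "\<And>\<tau>. 0 < \<tau> \<Longrightarrow> \<tau> < \<eta> \<Longrightarrow> \<exists>p\<in>D. dist p k < e \<and> infdist p K = \<tau>"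
      using infdist_takes_small_values_near[OF D K \<open>k \<in> K\<close> \<open>e > 0\<close>] by blast
    obtain \<tau> where \<tau>: "0 < \<tau>" "\<tau> < min \<eta> \<delta>" "sin (1 / \<tau>) = sin c"
      using sin_inverse_eq_near_0[of "min \<eta> \<delta>"] \<eta>(1) \<delta> by auto
    then obtain p where "p \<in> D" "dist p k < e" "infdist p K = \<tau>"
      using \<eta>(2) by auto
    then show "\<exists>p\<in>?S. dist p k < e"
      using \<tau> by auto
  qed
qed

lemma open_infdist_sin_preimage:
  assumes "open T"
  shows "open {z. 0 < infdist z K \<and> sin (1 / infdist z K) \<in> T}"
proof -
  have "open ({z. 0 < infdist z K} \<inter> (\<lambda>z. sin (1 / infdist z K)) -` T)"
    by (intro continuous_open_preimage assms open_Collect_less continuous_intros) auto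
  then show ?thesis
    by (simp add: vimage_def Collect_conj_eq)
qed

text \<open>The two pieces are separated by the sign of \<open>sin (1 / infdist z K)\<close>, which changes
  infinitely often near every point of K.\<close>
lemma split_open_set_along_nowhere_dense:
  fixes D K :: "'a::euclidean_space set"
  assumes D: "open D" and K: "compact K" "K \<noteq> {}" "K \<subseteq> D" "interior K = {}"
  obtains V W where "open V" "open W" "V \<subseteq> D" "closure W \<subseteq> D" "V \<inter> W = {}"
    "D \<subseteq> closure V \<union> closure W" "K \<subseteq> closure V \<inter> closure W"
proof -
  define d where "d z = infdist z K" for z
  obtain \<delta> where \<delta>: "\<delta> > 0" "{z. d z \<le> \<delta>} \<subseteq> D"
    using compact_in_open_separated[OF K(2,1) D K(3)] unfolding d_def by blast
  define V where "V = D \<inter> ({z. \<delta> < d z} \<union> {z. 0 < d z \<and> sin (1 / d z) \<in> {0<..}})"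
  define W where "W = D - closure V"
  define W0 where "W0 = D \<inter> {z. d z < \<delta>} \<inter> {z. 0 < d z \<and> sin (1 / d z) \<in> {..<0}}"
  have "open V"
    unfolding V_def d_def using D open_infdist_sin_preimage[of "{0<..}" K]
    by (intro open_Int open_Un open_Collect_less continuous_intros) auto
  have "open W"
    unfolding W_def using D by auto
  have "D - V \<subseteq> {z. d z \<le> \<delta>}"
    by (auto simp: V_def)
  then have "W \<subseteq> {z. d z \<le> \<delta>}"
    using closure_subset[of V] by (auto simp: W_def)
  then have "closure W \<subseteq> {z. d z \<le> \<delta>}"
    unfolding d_def by (intro closure_minimal closed_Collect_le continuous_intros)
  then have "closure W \<subseteq> D"
    using \<delta>(2) by blast
  have "W0 \<subseteq> W"
  proof -
    have "open W0"
      unfolding W0_def d_def using D open_infdist_sin_preimage[of "{..<0}" K]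
      by (intro open_Int open_Collect_less continuous_intros) auto
    moreover have "W0 \<inter> V = {}"
      by (auto simp: W0_def V_def)
    ultimately have "W0 \<inter> closure V = {}"
      by (simp add: open_Int_closure_eq_empty)
    then show ?thesis
      by (auto simp: W_def W0_def)
  qed
  have K_closure: "K \<subseteq> closure {z\<in>D. 0 < d z \<and> d z < \<delta> \<and> sin (1 / d z) = sin c}" for c
    unfolding d_def
    by (rule nowhere_dense_subset_closure_sin_level[OF D K(3) compact_imp_closed[OF K(1)] K(4) \<delta>(1)])
  have "{z\<in>D. 0 < d z \<and> d z < \<delta> \<and> sin (1 / d z) = sin (pi / 2)} \<subseteq> V"
    by (auto simp: V_def)
  then have "K \<subseteq> closure V"
    using K_closure closure_mono by blast
  moreover have "{z\<in>D. 0 < d z \<and> d z < \<delta> \<and> sin (1 / d z) = sin (- pi / 2)} \<subseteq> W"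
    using \<open>W0 \<subseteq> W\<close> by (auto simp: W0_def)
  then have "K \<subseteq> closure W"
    using K_closure closure_mono by blast
  moreover have "V \<subseteq> D" "V \<inter> W = {}" "D \<subseteq> closure V \<union> closure W"
    using closure_subset[of V] closure_subset[of W] by (auto simp: V_def W_def)
  ultimately show ?thesis
    using that \<open>open V\<close> \<open>open W\<close> \<open>closure W \<subseteq> D\<close> by blast
qed

lemma interior_closure_disjoint:
  assumes "open V" "open W" "V \<inter> W = {}"
  shows "interior (closure V) \<inter> interior (closure W) = {}"
proof -
  have "V \<inter> closure W = {}"
    using assms by (simp add: open_Int_closure_eq_empty)
  then have "interior (closure W) \<inter> V = {}"
    using interior_subset by blast
  then have "interior (closure W) \<inter> closure V = {}"
    by (simp add: open_Int_closure_eq_empty)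
  then show ?thesis
    using interior_subset by blast
qed

lemma interior_Un_closed_disjoint:
  assumes "closed A" "closed B" "A \<inter> B = {}"
  shows "interior (A \<union> B) \<subseteq> interior A \<union> interior B"
proof
  fix z assume "z \<in> interior (A \<union> B)"
  then obtain S where S: "open S" "z \<in> S" "S \<subseteq> A \<union> B"
    by (meson interiorE)
  show "z \<in> interior A \<union> interior B"
  proof (cases "z \<in> A")
    case True
    then have "z \<in> interior A"
      using S assms by (intro interiorI[of "S - B"]) auto
    then show ?thesis
      by simp
  next
    case False
    then have "z \<in> interior B"
      using S assms by (intro interiorI[of "S - A"]) auto
    then show ?thesis
      by simp
  qed
qed

section \<open>A fundamental region of larger area\<close>

lemma closure_modular_domain_disjoint_translate:
  assumes "V \<subseteq> modular_domain" "S \<subseteq> modular_domain"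
  shows "closure V \<inter> (+) 1 ` S = {}"
  using closure_mono[OF assms(1)] closure_modular_domain_subset assms(2)
  by (fastforce simp: modular_domain_def)

lemma translate_modular_domain_subset_uhp: "S \<subseteq> modular_domain \<Longrightarrow> (+) 1 ` S \<subseteq> uhp"
  by (auto simp: modular_domain_def uhp_def)

lemma closure_H_two_pieces:
  assumes "V \<subseteq> modular_domain" "closure W \<subseteq> modular_domain"
  shows "closure_H (V \<union> (+) 1 ` W) = closure V \<inter> uhp \<union> (+) 1 ` closure W"
  using translate_modular_domain_subset_uhp[OF assms(2)]
  by (auto simp: closure_H_def closure_Un closure_translation)

lemma modular_region_subset_closures:
  assumes "modular_domain \<subseteq> closure V \<union> closure W"
  shows "modular_region \<subseteq> closure V \<inter> uhp \<union> closure W"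
  using closure_mono[OF assms]
  by (auto simp: closure_Un simp flip: closure_H_modular_domain simp: closure_H_def)

lemma gamma_injective_two_pieces:
  assumes V: "open V" "V \<subseteq> modular_domain" and W: "open W" "closure W \<subseteq> modular_domain"
    and disj: "V \<inter> W = {}"
  shows "gamma_injective SL2Z (interior_H (closure_H (V \<union> (+) 1 ` W)))"
proof -
  define A where "A = interior (closure V) \<inter> uhp"
  define B where "B = interior (closure W)"
  have "A \<subseteq> interior (closure modular_domain) \<inter> uhp"
    unfolding A_def using closure_mono[OF V(2)] interior_mono by blast
  also have "\<dots> = modular_domain"
    using open_uhp interior_modular_region
    by (simp flip: closure_H_modular_domain add: closure_H_def interior_open)
  finally have "A \<union> B \<subseteq> modular_domain"
    using W(2) interior_subset[of "closure W"] by (auto simp: B_def)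
  then have "gamma_injective SL2Z (A \<union> mobius (mat_T 1) ` B)"
    using interior_closure_disjoint[OF V(1) W(1) disj] modular_domain_subset_uhp
    by (intro gamma_injective_Un_image[OF fuchsian_SL2Z mat_T_in_SL2Z]
        gamma_injective_subset[OF gamma_injective_modular_domain]) (auto simp: A_def B_def)
  moreover have "interior (closure (V \<union> (+) 1 ` W)) \<subseteq> interior (closure V) \<union> interior ((+) 1 ` closure W)"
    unfolding closure_Un closure_translation
    using closure_modular_domain_disjoint_translate[OF V(2) W(2)]
    by (intro interior_Un_closed_disjoint closed_translation) auto
  then have "interior (closure (V \<union> (+) 1 ` W)) \<inter> uhp \<subseteq> A \<union> (+) 1 ` B"
    by (auto simp: interior_translation A_def B_def)
  ultimately show ?thesis
    unfolding interior_H_closure_H image_mobius_mat_T[of 1, simplified]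
    by (rule gamma_injective_subset)
qed

lemma gamma_covers_two_pieces:
  assumes "V \<subseteq> modular_domain" "closure W \<subseteq> modular_domain"
    and "modular_domain \<subseteq> closure V \<union> closure W"
  shows "gamma_covers SL2Z (closure_H (V \<union> (+) 1 ` W))"
proof -
  have "gamma_covers SL2Z (closure V \<inter> uhp \<union> closure W)"
    using gamma_covers_modular_region modular_region_subset_closures[OF assms(3)]
    by (rule gamma_covers_mono)
  then show ?thesis
    using gamma_covers_Un_image[OF fuchsian_SL2Z mat_T_in_SL2Z[of 1]]
    by (simp add: closure_H_two_pieces[OF assms(1,2)] image_mobius_mat_T[of 1, simplified])
qed

lemma fundamental_region_two_pieces:
  assumes V: "open V" "V \<subseteq> modular_domain" and W: "open W" "closure W \<subseteq> modular_domain"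
    and "V \<inter> W = {}" "modular_domain \<subseteq> closure V \<union> closure W"
  shows "fundamental_region SL2Z (closure_H (V \<union> (+) 1 ` W))"
proof (rule fundamental_region_closure_H)
  show "open (V \<union> (+) 1 ` W)"
    using V(1) W(1) by (intro open_Un open_translation)
  show "V \<union> (+) 1 ` W \<subseteq> uhp"
    using V(2) W(2) closure_subset[of W] translate_modular_domain_subset_uhp[of W]
      modular_domain_subset_uhp by blast
qed (use assms gamma_injective_two_pieces gamma_covers_two_pieces in auto)

lemma hyp_area_two_pieces:
  assumes V: "V \<subseteq> modular_domain" and W: "closure W \<subseteq> modular_domain"
  shows "hyp_area (closure_H (V \<union> (+) 1 ` W)) =
    hyp_area (closure V \<inter> uhp \<union> closure W) + hyp_area (closure V \<inter> uhp \<inter> closure W)"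
proof -
  have [measurable]: "closure V \<inter> uhp \<in> sets borel" "closure W \<in> sets borel"
    "(+) 1 ` closure W \<in> sets borel"
    by (auto intro: borel_closed closed_translation)
  have "hyp_area (closure_H (V \<union> (+) 1 ` W)) = hyp_area (closure V \<inter> uhp) + hyp_area ((+) 1 ` closure W)"
    unfolding closure_H_two_pieces[OF V W] hyp_area_def
    using closure_modular_domain_disjoint_translate[OF V W]
    by (intro plus_emeasure[symmetric]) auto
  also have "hyp_area ((+) 1 ` closure W) = hyp_area (closure W)"
    using hyp_area_translation[of "closure W" 1] by simp
  also have "hyp_area (closure V \<inter> uhp) + hyp_area (closure W) =
      hyp_area (closure V \<inter> uhp \<union> closure W) + hyp_area (closure V \<inter> uhp \<inter> closure W)"
    unfolding hyp_area_def by (intro emeasure_Un_Int) auto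
  finally show ?thesis .
qed

lemma obtain_nowhere_dense_in_modular_domain:
  obtains K where "compact K" "K \<subseteq> modular_domain" "interior K = {}" "hyp_area K > 0"
proof -
  define B where "B = cbox (Complex (-1/4) 2) (Complex (1/4) 3)"
  have B_sub: "B \<subseteq> modular_domain"
  proof
    fix z assume "z \<in> B"
    then have "\<bar>Re z\<bar> < 1/2" "2 \<le> Im z"
      by (auto simp: B_def cbox_complex_eq)
    then show "z \<in> modular_domain"
      using abs_Im_le_cmod[of z] by (auto simp: modular_domain_def)
  qed
  have "emeasure lborel B = ennreal (1/2)"
    by (simp add: B_def emeasure_lborel_cbox_eq Basis_complex_def inner_complex_def)
  then have "emeasure lborel B > 0"
    by (simp only: ennreal_less_zero_iff)
  moreover have "closed B"
    unfolding B_def by (rule closed_cbox)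
  ultimately obtain K where K: "K \<subseteq> B" "closed K" "interior K = {}" "emeasure lborel K > 0"
    using closed_nowhere_dense_subset by blast
  have "compact K"
    using bounded_subset[OF bounded_cbox K(1)[unfolded B_def]] K(2) by (simp add: compact_eq_bounded_closed)
  moreover have "K \<subseteq> modular_domain"
    using K(1) B_sub by blast
  moreover have "hyp_area K \<noteq> 0"
    using K(2,4) \<open>K \<subseteq> modular_domain\<close> modular_domain_subset_uhp hyp_area_eq_0_iff[of K]
    by (auto simp: borel_closed)
  ultimately show ?thesis
    using that K(3) by (simp add: zero_less_iff_neq_zero)
qed

lemma exists_fundamental_region_larger_area:
  "\<exists>F. fundamental_region SL2Z F \<and> hyp_area modular_region < hyp_area F"
proof -
  obtain K where K: "compact K" "K \<subseteq> modular_domain" "interior K = {}" "hyp_area K > 0"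
    by (rule obtain_nowhere_dense_in_modular_domain)
  moreover have "K \<noteq> {}"
    using K(4) by (auto simp: hyp_area_def)
  ultimately obtain V W where VW: "open V" "open W" "V \<subseteq> modular_domain" "closure W \<subseteq> modular_domain"
    "V \<inter> W = {}" "modular_domain \<subseteq> closure V \<union> closure W" "K \<subseteq> closure V \<inter> closure W"
    using split_open_set_along_nowhere_dense[OF open_modular_domain] by blast
  define F where "F = closure_H (V \<union> (+) 1 ` W)"
  have "0 < hyp_area K"
    by (fact K(4))
  also have "hyp_area K \<le> hyp_area (closure V \<inter> uhp \<inter> closure W)"
    unfolding hyp_area_def using VW(7) K(2) modular_domain_subset_uhp
    by (intro emeasure_mono) (auto intro: borel_closed)
  finally have "hyp_area modular_region < hyp_area modular_region + hyp_area (closure V \<inter> uhp \<inter> closure W)"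
    using hyp_area_modular_region_finite by simp
  also have "\<dots> \<le> hyp_area (closure V \<inter> uhp \<union> closure W) + hyp_area (closure V \<inter> uhp \<inter> closure W)"
    unfolding hyp_area_def using modular_region_subset_closures[OF VW(6)]
    by (intro add_right_mono emeasure_mono) auto
  also have "\<dots> = hyp_area F"
    unfolding F_def using hyp_area_two_pieces[OF VW(3,4)] by simp
  finally show ?thesis
    using fundamental_region_two_pieces[OF VW(1,3,2,4,5,6)] F_def by blast
qed

theorem proposition4:
  shows "(\<exists>\<Gamma> F1 F2. fuchsian \<Gamma> \<and> hyp_area F1 \<noteq> hyp_area F2 \<and>
            (\<forall>F\<in>{F1, F2}. F \<subseteq> uhp \<and>
               closedin (top_of_set uhp) F \<and>
               (\<forall>z\<in>interior_H F. \<forall>w\<in>interior_H F. z \<noteq> w \<longrightarrow> \<not> gequiv \<Gamma> z w) \<and>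
               (\<forall>z\<in>uhp. \<exists>M\<in>\<Gamma>. mobius M z \<in> F) \<and>
               F = closure_H (interior_H F)))
       \<and>
       (\<exists>\<Gamma> F1 F2. fuchsian \<Gamma> \<and> hyp_area F1 \<noteq> hyp_area F2 \<and>
            (\<forall>F\<in>{F1, F2}. F \<subseteq> uhp \<and>
               F = closure_H (interior_H F) \<and>
               (\<exists>G. open G \<and> G \<subseteq> uhp \<and> F = closure_H G \<and>
                  (\<forall>z\<in>G. \<forall>w\<in>G. z \<noteq> w \<longrightarrow> \<not> gequiv \<Gamma> z w) \<and>
                  (\<forall>z\<in>uhp. \<exists>M\<in>\<Gamma>. mobius M z \<in> F))))"
proof -
  obtain F where F: "fundamental_region SL2Z F" "hyp_area modular_region < hyp_area F"
    using exists_fundamental_region_larger_area by blast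
  then have regions: "\<forall>F'\<in>{modular_region, F}. fundamental_region SL2Z F'"
    and areas: "hyp_area modular_region \<noteq> hyp_area F"
    using fundamental_region_modular_region by auto
  have kernels: "\<forall>F'\<in>{modular_region, F}. F' \<subseteq> uhp \<and>
               F' = closure_H (interior_H F') \<and>
               (\<exists>G. open G \<and> G \<subseteq> uhp \<and> F' = closure_H G \<and>
                  (\<forall>z\<in>G. \<forall>w\<in>G. z \<noteq> w \<longrightarrow> \<not> gequiv SL2Z z w) \<and>
                  (\<forall>z\<in>uhp. \<exists>M\<in>SL2Z. mobius M z \<in> F'))" (is "\<forall>F'\<in>_. ?kernel F'")
  proof
    fix F' assume "F' \<in> {modular_region, F}"
    then have "fundamental_region SL2Z F'"
      using regions by blast
    from fundamental_region_open_kernel[OF this] show "?kernel F'"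
      unfolding gamma_injective_def gamma_covers_def .
  qed
  show ?thesis
    using fuchsian_SL2Z areas kernels
      regions[unfolded fundamental_region_def gamma_injective_def gamma_covers_def] by blast
qed

end
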